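(* Let $\delta\ge0$, let $\rho\in D_\delta$ and let $\sigma\in[0,1+\delta)$. Then there is $C$ such that $E_{n,\sigma}\le C\Delta_n^{\sigma/(1+\delta)}$ for all $n\ge0$.
   Context: An irrational $\rho$ is in $D_\delta$ if there is $C>0$ with $|\rho-p/q|\ge Cq^{-2-\delta}$ for all rationals $p/q$. Write $\rho\in(0,1)$ as a continued fraction $\rho=[k_1,k_2,\dots]$ with convergents $p_n/q_n$, where $p_0=0,q_0=1,p_{-1}=1,q_{-1}=0$, $p_n=k_np_{n-1}+p_{n-2}$, $q_n=k_nq_{n-1}+q_{n-2}$. Set $\Delta_n=|q_n\rho-p_n|$ for $n\ge-1$ (so $\Delta_{-1}=1$), and $E_{n,\sigma}=\sum_{k=0}^n\frac{\Delta_n}{\Delta_{n-k}}\Delta_{n-k-1}^\sigma$. *)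

theory Defs
  imports Complex_Main
begin

definition D_class :: "real \<Rightarrow> real set" where
  "D_class \<delta> = {\<rho>. \<rho> \<notin> \<rat> \<and> (\<exists>C>0. \<forall>p q::int. q \<ge> 1 \<longrightarrow>
      \<bar>\<rho> - real_of_int p / real_of_int q\<bar> \<ge> C * (real_of_int q) powr (-2 - \<delta>))}"

fun cf_rem :: "real \<Rightarrow> nat \<Rightarrow> real" where
  "cf_rem \<rho> 0 = \<rho>"
| "cf_rem \<rho> (Suc m) = frac (1 / cf_rem \<rho> m)"

text \<open>Partial quotients k_m (m >= 1): rho = [k_1, k_2, ...].\<close>
definition cf_k :: "real \<Rightarrow> nat \<Rightarrow> int" where
  "cf_k \<rho> m = \<lfloor>1 / cf_rem \<rho> (m - 1)\<rfloor>"

text \<open>Shifted numerators/denominators: cf_pp rho j = p_(j-1), cf_qq rho j = q_(j-1).\<close>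
fun cf_pp :: "real \<Rightarrow> nat \<Rightarrow> int" where
  "cf_pp \<rho> 0 = 1"
| "cf_pp \<rho> (Suc 0) = 0"
| "cf_pp \<rho> (Suc (Suc m)) = cf_k \<rho> (Suc m) * cf_pp \<rho> (Suc m) + cf_pp \<rho> m"

fun cf_qq :: "real \<Rightarrow> nat \<Rightarrow> int" where
  "cf_qq \<rho> 0 = 0"
| "cf_qq \<rho> (Suc 0) = 1"
| "cf_qq \<rho> (Suc (Suc m)) = cf_k \<rho> (Suc m) * cf_qq \<rho> (Suc m) + cf_qq \<rho> m"

definition cf_p :: "real \<Rightarrow> int \<Rightarrow> int" where
  "cf_p \<rho> n = cf_pp \<rho> (nat (n + 1))"

definition cf_q :: "real \<Rightarrow> int \<Rightarrow> int" where
  "cf_q \<rho> n = cf_qq \<rho> (nat (n + 1))"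

definition cf_Delta :: "real \<Rightarrow> int \<Rightarrow> real" where
  "cf_Delta \<rho> n = \<bar>real_of_int (cf_q \<rho> n) * \<rho> - real_of_int (cf_p \<rho> n)\<bar>"

definition cf_E :: "real \<Rightarrow> real \<Rightarrow> nat \<Rightarrow> real" where
  "cf_E \<rho> \<sigma> n = (\<Sum>k\<in>{0..n}.
      cf_Delta \<rho> (int n) / cf_Delta \<rho> (int n - int k)
      * cf_Delta \<rho> (int n - int k - 1) powr \<sigma>)"

end

theory Submission
  imports Defs
begin

text \<open>Writing x_i for the Gauss-map iterates, Delta_(j-1) = x_0 \<cdots> x_(j-1); since
  x frac(1/x) \<le> 1/2 for 0 < x < 1, the Delta_n decay geometrically:
  Delta_n / Delta_(n-k) \<le> sqrt 2 * sqrt 2^(-k). From q_(n+1) Delta_n \<le> 1 and the Diophantine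
  condition Delta_(n+1) \<ge> C q_(n+1)^(-1-\<delta>) one gets Delta_(n-1)^\<sigma> \<le> C' Delta_n^a with
  a = \<sigma>/(1+\<delta>) < 1. Hence the k-th term of E_(n,\<sigma>) is at most
  C' Delta_n^a (Delta_n/Delta_(n-k))^(1-a), i.e. Delta_n^a times a geometric sequence in k.\<close>

lemma cf_rem_irrational_in_unit:
  assumes "\<rho> \<notin> \<rat>" "0 < \<rho>" "\<rho> < 1"
  shows "cf_rem \<rho> m \<notin> \<rat> \<and> 0 < cf_rem \<rho> m \<and> cf_rem \<rho> m < 1"
proof (induction m)
  case 0
  then show ?case using assms by simp
next
  case (Suc m)
  define x where "x = cf_rem \<rho> m"
  have x: "x \<notin> \<rat>" "0 < x" using Suc x_def by auto
  have "1/x \<notin> \<rat>"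
  proof
    assume "1/x \<in> \<rat>"
    then have "inverse (1/x) \<in> \<rat>" by (rule Rats_inverse)
    then show False using x by simp
  qed
  then have irr: "frac (1/x) \<notin> \<rat>"
    by (metis Rats_add Rats_of_int frac_def diff_add_cancel)
  then have "frac (1/x) \<noteq> 0" by (metis Rats_0)
  then have "0 < frac (1/x)" using frac_ge_0[of "1/x"] by linarith
  then show ?case using irr frac_lt_1[of "1/x"] by (simp add: x_def)
qed

lemma mult_frac_inverse_le_half:
  fixes x :: real
  assumes "0 < x" "x < 1"
  shows "x * frac (1/x) \<le> 1/2"
proof (cases "x \<le> 1/2")
  case True
  have "x * frac (1/x) \<le> x" using frac_lt_1[of "1/x"] assms
    by (simp add: mult_left_le less_imp_le)
  then show ?thesis using True by simp
next
  case False
  then have "\<lfloor>1/x\<rfloor> = 1" using assms by (simp add: floor_eq_iff field_simps)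
  then have "x * frac (1/x) = 1 - x" using assms by (simp add: frac_def field_simps)
  then show ?thesis using False by simp
qed

lemma powr_le_of_mult_powr_le:
  fixes y z C a e :: real
  assumes "0 < C" "0 \<le> z" "0 \<le> a" "C * z powr e \<le> y"
  shows "z powr (e * a) \<le> C powr (-a) * y powr a"
proof -
  have "z powr (e * a) = (z powr e) powr a" by (simp add: powr_powr)
  also have "\<dots> \<le> (y / C) powr a"
    using assms by (intro powr_mono2) (auto simp: field_simps)
  also have "\<dots> = C powr (-a) * y powr a"
    by (simp add: powr_divide powr_minus_divide)
  finally show ?thesis .
qed

text \<open>Splitting x/y as x^a (x/y)^(1-a) / y^a lets the factor y^a cancel.\<close>
lemma ratio_mult_powr_le:
  fixes x y z t a \<sigma> K :: real
  assumes "0 < x" "0 < y" "0 \<le> a" "a \<le> 1" "0 \<le> K"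
    and "z powr \<sigma> \<le> K * y powr a" and "x / y \<le> t"
  shows "x / y * z powr \<sigma> \<le> K * x powr a * t powr (1 - a)"
proof -
  have split: "x / y * y powr a = x powr a * (x / y) powr (1 - a)"
    using assms(1,2) by (simp add: powr_divide powr_diff field_simps powr_add[symmetric])
  have "x / y * z powr \<sigma> \<le> x / y * (K * y powr a)"
    using assms by (intro mult_left_mono) auto
  also have "\<dots> = K * (x powr a * (x / y) powr (1 - a))" by (simp add: split[symmetric])
  also have "\<dots> \<le> K * (x powr a * t powr (1 - a))"
    using assms by (intro mult_left_mono powr_mono2) auto
  finally show ?thesis by simp
qed

lemma sum_atMost_power_le:
  fixes r :: real
  assumes "0 \<le> r" "r < 1"
  shows "(\<Sum>k\<le>n. r ^ k) \<le> 1 / (1 - r)"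
proof -
  have "(\<Sum>k\<le>n. r ^ k) = (\<Sum>k<Suc n. r ^ k)" by (simp add: lessThan_Suc_atMost)
  also have "\<dots> \<le> (\<Sum>k. r ^ k)"
    using assms by (intro sum_le_suminf summable_geometric) auto
  also have "\<dots> = 1 / (1 - r)" using assms by (simp add: suminf_geometric)
  finally show ?thesis .
qed

definition cf_rem_prod :: "real \<Rightarrow> nat \<Rightarrow> real" where
  "cf_rem_prod \<rho> j = (\<Prod>i<j. cf_rem \<rho> i)"

lemma cf_rem_prod_0 [simp]: "cf_rem_prod \<rho> 0 = 1"
  by (simp add: cf_rem_prod_def)

lemma cf_rem_prod_Suc: "cf_rem_prod \<rho> (Suc j) = cf_rem_prod \<rho> j * cf_rem \<rho> j"
  by (simp add: cf_rem_prod_def)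

lemma cf_rem_Suc: "cf_rem \<rho> (Suc j) = 1 / cf_rem \<rho> j - of_int (cf_k \<rho> (Suc j))"
  by (simp add: cf_k_def frac_def)

lemma cf_rem_prod_Suc_Suc:
  "cf_rem_prod \<rho> (Suc (Suc j)) = cf_rem_prod \<rho> (Suc j) * (1 / cf_rem \<rho> j - cf_k \<rho> (Suc j))"
  by (simp only: cf_rem_prod_Suc[of \<rho> "Suc j"] cf_rem_Suc)

context
  fixes \<rho> :: real
  assumes irrational: "\<rho> \<notin> \<rat>" and pos: "0 < \<rho>" and less_1: "\<rho> < 1"
begin

lemma cf_rem_pos: "0 < cf_rem \<rho> m"
  using cf_rem_irrational_in_unit[OF irrational pos less_1] by blast

lemma cf_rem_less_1: "cf_rem \<rho> m < 1"
  using cf_rem_irrational_in_unit[OF irrational pos less_1] by blast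

lemma cf_k_ge_1: "cf_k \<rho> (Suc j) \<ge> 1"
proof -
  have "1 \<le> 1 / cf_rem \<rho> j" using cf_rem_pos[of j] cf_rem_less_1[of j] by simp
  then show ?thesis by (simp add: cf_k_def)
qed

lemma cf_rem_prod_pos: "0 < cf_rem_prod \<rho> j"
  unfolding cf_rem_prod_def using cf_rem_pos by (simp add: prod_pos)

lemma cf_qq_nonneg_Suc_ge_1: "cf_qq \<rho> j \<ge> 0 \<and> cf_qq \<rho> (Suc j) \<ge> 1"
proof (induction j)
  case 0
  then show ?case by simp
next
  case (Suc j)
  have "cf_k \<rho> (Suc j) * cf_qq \<rho> (Suc j) \<ge> 1 * 1"
    using cf_k_ge_1[of j] Suc.IH by (intro mult_mono) auto
  then show ?case using Suc.IH by simp
qed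

lemma cf_qq_remainder:
  "real_of_int (cf_qq \<rho> j) * \<rho> - cf_pp \<rho> j = (-1) ^ Suc j * cf_rem_prod \<rho> j"
proof (induction j rule: induct_nat_012)
  case (ge2 i)
  have x: "cf_rem \<rho> i \<noteq> 0" using cf_rem_pos[of i] by simp
  have "real_of_int (cf_qq \<rho> (Suc (Suc i))) * \<rho> - cf_pp \<rho> (Suc (Suc i))
      = cf_k \<rho> (Suc i) * (real_of_int (cf_qq \<rho> (Suc i)) * \<rho> - cf_pp \<rho> (Suc i))
        + (real_of_int (cf_qq \<rho> i) * \<rho> - cf_pp \<rho> i)"
    by (simp add: algebra_simps)
  also have "\<dots> = (-1) ^ i * cf_rem_prod \<rho> i * (cf_k \<rho> (Suc i) * cf_rem \<rho> i - 1)"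
    using ge2 by (simp add: cf_rem_prod_Suc algebra_simps)
  also have "\<dots> = (-1) ^ Suc (Suc (Suc i)) * cf_rem_prod \<rho> (Suc (Suc i))"
    unfolding cf_rem_prod_Suc_Suc using x by (simp add: cf_rem_prod_Suc field_simps)
  finally show ?case .
qed (simp_all add: cf_rem_prod_Suc)

lemma cf_Delta_eq_cf_rem_prod: "cf_Delta \<rho> (int j - 1) = cf_rem_prod \<rho> j"
  using cf_qq_remainder[of j] cf_rem_prod_pos[of j]
  by (simp add: cf_Delta_def cf_q_def cf_p_def abs_mult)

lemma cf_qq_cross_identity:
  "real_of_int (cf_qq \<rho> (Suc j)) * cf_rem_prod \<rho> j
     + real_of_int (cf_qq \<rho> j) * cf_rem_prod \<rho> (Suc j) = 1"
proof (induction j)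
  case 0
  then show ?case by simp
next
  case (Suc j)
  have x: "cf_rem \<rho> j \<noteq> 0" using cf_rem_pos[of j] by simp
  show ?case
    unfolding cf_rem_prod_Suc_Suc using Suc.IH x by (simp add: cf_rem_prod_Suc field_simps)
qed

lemma cf_qq_Suc_le_inverse: "real_of_int (cf_qq \<rho> (Suc j)) \<le> 1 / cf_rem_prod \<rho> j"
proof -
  have "0 \<le> real_of_int (cf_qq \<rho> j) * cf_rem_prod \<rho> (Suc j)"
    using cf_qq_nonneg_Suc_ge_1[of j] cf_rem_prod_pos[of "Suc j"] by simp
  then show ?thesis
    using cf_qq_cross_identity[of j] cf_rem_prod_pos[of j] by (simp add: field_simps)
qed

lemma cf_rem_prod_Suc_Suc_le_half: "cf_rem_prod \<rho> (Suc (Suc j)) \<le> cf_rem_prod \<rho> j / 2"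
proof -
  have "cf_rem_prod \<rho> (Suc (Suc j)) = cf_rem_prod \<rho> j * (cf_rem \<rho> j * frac (1 / cf_rem \<rho> j))"
    by (simp add: cf_rem_prod_Suc)
  also have "\<dots> \<le> cf_rem_prod \<rho> j * (1/2)"
    using mult_frac_inverse_le_half[OF cf_rem_pos cf_rem_less_1] cf_rem_prod_pos[of j]
    by (intro mult_left_mono) auto
  finally show ?thesis by simp
qed

lemma cf_rem_prod_decay:
  "cf_rem_prod \<rho> (s + k) \<le> sqrt 2 * (1 / sqrt 2) ^ k * cf_rem_prod \<rho> s"
proof (induction k rule: induct_nat_012)
  case 0
  show ?case using cf_rem_prod_pos[of s] by (simp add: less_imp_le)
next
  case 1
  show ?case
    using cf_rem_prod_pos[of s] cf_rem_less_1[of s] by (simp add: cf_rem_prod_Suc mult_left_le)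
next
  case (ge2 i)
  have "cf_rem_prod \<rho> (s + Suc (Suc i)) \<le> cf_rem_prod \<rho> (s + i) / 2"
    using cf_rem_prod_Suc_Suc_le_half[of "s + i"] by simp
  also have "\<dots> \<le> sqrt 2 * (1 / sqrt 2) ^ i * cf_rem_prod \<rho> s / 2"
    using ge2 by simp
  also have "\<dots> = sqrt 2 * (1 / sqrt 2) ^ Suc (Suc i) * cf_rem_prod \<rho> s"
    by (simp add: power2_eq_square[symmetric])
  finally show ?case .
qed

context
  fixes C \<delta> :: real
  assumes C_pos: "0 < C" and \<delta>_nonneg: "0 \<le> \<delta>"
    and dio: "\<And>(p::int) (q::int). q \<ge> 1 \<Longrightarrow> C * real_of_int q powr (-2 - \<delta>) \<le> \<bar>\<rho> - p / q\<bar>"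
begin

lemma cf_rem_prod_Suc_ge: "C * cf_rem_prod \<rho> i powr (1 + \<delta>) \<le> cf_rem_prod \<rho> (Suc i)"
proof -
  define q where "q = real_of_int (cf_qq \<rho> (Suc i))"
  define p where "p = real_of_int (cf_pp \<rho> (Suc i))"
  have q1: "q \<ge> 1" using cf_qq_nonneg_Suc_ge_1[of i] by (simp add: q_def)
  have "C * cf_rem_prod \<rho> i powr (1 + \<delta>) = C * (1 / cf_rem_prod \<rho> i) powr (-1 - \<delta>)"
    using cf_rem_prod_pos[of i] by (simp add: powr_divide powr_minus_divide[symmetric] add.commute)
  also have "\<dots> \<le> C * q powr (-1 - \<delta>)"
    using C_pos \<delta>_nonneg q1 cf_qq_Suc_le_inverse[of i]
    by (intro mult_left_mono powr_mono2') (auto simp: q_def)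
  also have "\<dots> = q * (C * q powr (-2 - \<delta>))"
    using q1 powr_mult_base[of q "-2 - \<delta>"] by simp
  also have "\<dots> \<le> q * \<bar>\<rho> - p / q\<bar>"
    using dio[of "cf_qq \<rho> (Suc i)" "cf_pp \<rho> (Suc i)"] q1
    by (intro mult_left_mono) (auto simp: q_def p_def)
  also have "\<dots> = \<bar>q * \<rho> - p\<bar>"
    using q1 by (simp add: abs_mult[symmetric] field_simps)
  also have "\<dots> = cf_rem_prod \<rho> (Suc i)"
    using cf_qq_remainder[of "Suc i"] cf_rem_prod_pos[of "Suc i"]
    by (simp add: q_def p_def abs_mult)
  finally show ?thesis .
qed

lemma cf_E_summand_le:
  assumes "0 \<le> a" "a \<le> 1" "k \<le> n"
  shows "cf_Delta \<rho> (int n) / cf_Delta \<rho> (int n - int k) * cf_Delta \<rho> (int n - int k - 1) powr ((1 + \<delta>) * a)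
    \<le> C powr (-a) * sqrt 2 powr (1 - a) * cf_Delta \<rho> (int n) powr a * ((1 / sqrt 2) powr (1 - a)) ^ k"
proof -
  have "cf_rem_prod \<rho> (n - k) powr ((1 + \<delta>) * a) \<le> C powr (-a) * cf_rem_prod \<rho> (Suc (n - k)) powr a"
    using powr_le_of_mult_powr_le[OF C_pos less_imp_le[OF cf_rem_prod_pos] assms(1) cf_rem_prod_Suc_ge] .
  moreover have "cf_rem_prod \<rho> (Suc n) / cf_rem_prod \<rho> (Suc (n - k)) \<le> sqrt 2 * (1 / sqrt 2) ^ k"
    using cf_rem_prod_decay[of "Suc (n - k)" k] cf_rem_prod_pos[of "Suc (n - k)"] assms(3)
    by (simp add: field_simps)
  ultimately have "cf_rem_prod \<rho> (Suc n) / cf_rem_prod \<rho> (Suc (n - k)) * cf_rem_prod \<rho> (n - k) powr ((1 + \<delta>) * a)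
      \<le> C powr (-a) * cf_rem_prod \<rho> (Suc n) powr a * (sqrt 2 * (1 / sqrt 2) ^ k) powr (1 - a)"
    using assms by (intro ratio_mult_powr_le cf_rem_prod_pos) auto
  also have "(sqrt 2 * (1 / sqrt 2) ^ k) powr (1 - a) = sqrt 2 powr (1 - a) * ((1 / sqrt 2) powr (1 - a)) ^ k"
    by (simp add: powr_mult powr_realpow[symmetric] powr_power powr_powr mult.commute)
  moreover have "cf_Delta \<rho> (int n) = cf_rem_prod \<rho> (Suc n)"
    using cf_Delta_eq_cf_rem_prod[of "Suc n"] by simp
  moreover have "cf_Delta \<rho> (int n - int k) = cf_rem_prod \<rho> (Suc (n - k))"
    using cf_Delta_eq_cf_rem_prod[of "Suc (n - k)"] assms(3) by (simp add: of_nat_diff)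
  moreover have "cf_Delta \<rho> (int n - int k - 1) = cf_rem_prod \<rho> (n - k)"
    using cf_Delta_eq_cf_rem_prod[of "n - k"] assms(3) by (simp add: of_nat_diff)
  ultimately show ?thesis by (simp add: ac_simps)
qed

lemma cf_E_le:
  assumes "0 \<le> a" "a < 1"
  shows "cf_E \<rho> ((1 + \<delta>) * a) n
    \<le> C powr (-a) * sqrt 2 powr (1 - a) / (1 - (1 / sqrt 2) powr (1 - a)) * cf_Delta \<rho> (int n) powr a"
proof -
  define r where "r = (1 / sqrt 2) powr (1 - a)"
  define K where "K = C powr (-a) * sqrt 2 powr (1 - a) * cf_Delta \<rho> (int n) powr a"
  have "(1 / sqrt 2) powr (1 - a) < 1 powr (1 - a)"
    using assms by (intro powr_less_mono2) auto
  then have r: "0 \<le> r" "r < 1" by (simp_all add: r_def)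
  have "cf_E \<rho> ((1 + \<delta>) * a) n \<le> (\<Sum>k\<le>n. K * r ^ k)"
    unfolding cf_E_def atLeast0AtMost K_def r_def
    using assms by (intro sum_mono cf_E_summand_le) auto
  also have "\<dots> = K * (\<Sum>k\<le>n. r ^ k)"
    by (simp add: sum_distrib_left)
  also have "\<dots> \<le> K * (1 / (1 - r))"
    using sum_atMost_power_le[OF r] by (intro mult_left_mono) (auto simp: K_def)
  finally show ?thesis by (simp add: K_def r_def)
qed

end

end

theorem lemma7:
  fixes \<delta> \<rho> \<sigma> :: real
  assumes "\<delta> \<ge> 0"
    and "0 < \<rho>" and "\<rho> < 1"
    and "\<rho> \<in> D_class \<delta>"
    and "0 \<le> \<sigma>" and "\<sigma> < 1 + \<delta>"
  shows "\<exists>C. \<forall>n::nat. cf_E \<rho> \<sigma> n \<le> C * cf_Delta \<rho> (int n) powr (\<sigma> / (1 + \<delta>))"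
proof -
  have irrational: "\<rho> \<notin> \<rat>" using assms(4) by (simp add: D_class_def)
  obtain C where "C > 0"
    and dio: "\<And>(p::int) (q::int). q \<ge> 1 \<Longrightarrow> C * real_of_int q powr (-2 - \<delta>) \<le> \<bar>\<rho> - p / q\<bar>"
    using assms(4) by (auto simp: D_class_def)
  define a where "a = \<sigma> / (1 + \<delta>)"
  have "0 \<le> a" "a < 1" and \<sigma>_eq: "(1 + \<delta>) * a = \<sigma>" using assms by (auto simp: a_def)
  from cf_E_le[OF irrational assms(2,3) \<open>C > 0\<close> assms(1) dio this(1,2)]
  show ?thesis unfolding \<sigma>_eq by (auto simp only: a_def)
qed

end
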